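(* Let $\mathfrak c\in\mathfrak C_{\mathrm{Rot}}$. Then there exists $C=C(\mathfrak c)>0$ such that for all $j\ge-1$, all $s\in\mathbb R$ and all $r_1,r_2\ge s$, $$\big|\langle S_j\mathcal E_{\mathfrak c}\mathbf 1_{[s,r_1]},f^j_{\mathfrak c,r_2}\rangle_{L^2(\mathbb R^2)}\big|\le C,$$ and hence for all $t\ge s$, $\big|\int_s^t\langle S_j\mathcal E_{\mathfrak c}\mathbf 1_{[s,r]},f^j_{\mathfrak c,r}\rangle\,dr\big|\le C(t-s)$.
   Context: Littlewood–Paley: fix a radial $C^\infty$ $\rho_0\ge0$ on $\mathbb R^2$ supported in $\{6/7\le|\xi|\le2\}$ with $\sum_{j\in\mathbb Z}\rho_0(2^{-j}\xi)=1$ for $\xi\ne0$; $\chi_0(\xi)=\sum_{j\le-1}\rho_0(2^{-j}\xi)$ ($\xi\ne0$), $\chi_0(0)=1$, $\chi_j=\chi_0(2^{-j}\cdot)$, $\check\chi_j=\mathcal F^{-1}\chi_j$, $S_ju=\check\chi_j*u$. Curves: $\mathfrak C$ = smooth $\mathfrak c=(\mathfrak c_1,\mathfrak c_2):\mathbb R\to\mathbb R^2$ with $\operatorname{supp}\dot{\mathfrak c}\subset[0,1]$ and $\mathfrak c_1(t)>0$. For bounded $h$, $\mathcal E_{\mathfrak c}h\in L^2(\mathbb R^2)$ is determined by $\langle H,\mathcal E_{\mathfrak c}h\rangle=\int_{\mathbb R}\int_0^{\mathfrak c_1(t)}H(x_1,\mathfrak c_2(t))h(t)\dot{\mathfrak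 c}_2(t)dx_1dt$. $\mathrm{Rot}(\mathfrak c)=\sup_{s<t}\|\mathcal E_{\mathfrak c}\mathbf 1_{[s,t]}\|_{L^\infty}$, $\mathfrak C_{\mathrm{Rot}}=\{\mathfrak c:\mathrm{Rot}(\mathfrak c)<\infty\}$. $f^j_{\mathfrak c,t}(x_1,x_2):=\dot{\mathfrak c}_2(t)\int_0^{\mathfrak c_1(t)}\check\chi_j(x_1-\xi,x_2-\mathfrak c_2(t))d\xi$ ($=\frac{d}{dt}S_j\mathcal E_{\mathfrak c}\mathbf 1_{[s,t]}$). *)

theory Defs
  imports "HOL-Analysis.Analysis"
begin

definition smooth1 :: "(real \<Rightarrow> real) \<Rightarrow> bool" where
  "smooth1 f \<longleftrightarrow> (\<forall>n x. ((deriv ^^ n) f) differentiable (at x))"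

definition pderiv2 :: "real \<times> real \<Rightarrow> (real \<times> real \<Rightarrow> real) \<Rightarrow> real \<times> real \<Rightarrow> real" where
  "pderiv2 v f x = deriv (\<lambda>t. f (x + t *\<^sub>R v)) 0"

definition smooth2 :: "(real \<times> real \<Rightarrow> real) \<Rightarrow> bool" where
  "smooth2 f \<longleftrightarrow>
     (\<forall>vs. set vs \<subseteq> {(1,0),(0,1)} \<longrightarrow>
        continuous_on UNIV (foldr pderiv2 vs f) \<and>
        (\<forall>v\<in>{(1,0),(0,1)}. \<forall>x. (\<lambda>t. foldr pderiv2 vs f (x + t *\<^sub>R v)) differentiable (at 0)))"

definition LP_profile :: "(real \<times> real \<Rightarrow> real) \<Rightarrow> bool" where
  "LP_profile \<rho>0 \<longleftrightarrow>
     smooth2 \<rho>0 \<and>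
     (\<forall>x y. norm x = norm y \<longrightarrow> \<rho>0 x = \<rho>0 y) \<and>
     (\<forall>\<xi>. 0 \<le> \<rho>0 \<xi>) \<and>
     (\<forall>\<xi>. \<rho>0 \<xi> \<noteq> 0 \<longrightarrow> 6/7 \<le> norm \<xi> \<and> norm \<xi> \<le> 2) \<and>
     (\<forall>\<xi>. \<xi> \<noteq> 0 \<longrightarrow> ((\<lambda>j::int. \<rho>0 (2 powr (- real_of_int j) *\<^sub>R \<xi>)) has_sum 1) UNIV)"

definition chi0 :: "(real \<times> real \<Rightarrow> real) \<Rightarrow> real \<times> real \<Rightarrow> real" where
  "chi0 \<rho>0 \<xi> = (if \<xi> = 0 then 1
      else infsum (\<lambda>j::int. \<rho>0 (2 powr (- real_of_int j) *\<^sub>R \<xi>)) {..-1})"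

definition chi :: "(real \<times> real \<Rightarrow> real) \<Rightarrow> int \<Rightarrow> real \<times> real \<Rightarrow> real" where
  "chi \<rho>0 j \<xi> = chi0 \<rho>0 (2 powr (- real_of_int j) *\<^sub>R \<xi>)"

text \<open>Inverse Fourier transform (convention: F f(xi) = integral f(x) e^{-i x.xi} dx).\<close>
definition chi_check :: "(real \<times> real \<Rightarrow> real) \<Rightarrow> int \<Rightarrow> real \<times> real \<Rightarrow> complex" where
  "chi_check \<rho>0 j x =
     (1 / (2 * pi)^2) *\<^sub>R (\<integral>\<xi>. of_real (chi \<rho>0 j \<xi>) * cis (x \<bullet> \<xi>) \<partial>lborel)"

definition Sj :: "(real \<times> real \<Rightarrow> real) \<Rightarrow> int \<Rightarrow> (real \<times> real \<Rightarrow> real) \<Rightarrow> real \<times> real \<Rightarrow> complex" where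
  "Sj \<rho>0 j u x = (\<integral>y. chi_check \<rho>0 j (x - y) * of_real (u y) \<partial>lborel)"

definition L2_inner :: "(real \<times> real \<Rightarrow> complex) \<Rightarrow> (real \<times> real \<Rightarrow> complex) \<Rightarrow> complex" where
  "L2_inner f g = (\<integral>x. f x * cnj (g x) \<partial>lborel)"

definition curve :: "(real \<Rightarrow> real \<times> real) \<Rightarrow> bool" where
  "curve c \<longleftrightarrow> smooth1 (\<lambda>t. fst (c t)) \<and> smooth1 (\<lambda>t. snd (c t)) \<and>
     (\<forall>t. t \<notin> {0..1} \<longrightarrow> deriv (\<lambda>\<tau>. fst (c \<tau>)) t = 0 \<and> deriv (\<lambda>\<tau>. snd (c \<tau>)) t = 0) \<and>
     (\<forall>t. fst (c t) > 0)"

text \<open>F is (a representative of) E_c h: F is in L^2 and satisfies the defining duality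
  against all continuous compactly supported test functions H.\<close>
definition E_rep :: "(real \<Rightarrow> real \<times> real) \<Rightarrow> (real \<Rightarrow> real) \<Rightarrow> (real \<times> real \<Rightarrow> real) \<Rightarrow> bool" where
  "E_rep c h F \<longleftrightarrow>
     F \<in> borel_measurable lborel \<and> integrable lborel (\<lambda>x. (F x)^2) \<and>
     (\<forall>H :: real \<times> real \<Rightarrow> real. continuous_on UNIV H \<and> compact (closure {x. H x \<noteq> 0}) \<longrightarrow>
        (\<integral>x. H x * F x \<partial>lborel) =
        (\<integral>t. (LBINT x1=0..fst (c t). H (x1, snd (c t))) * h t * deriv (\<lambda>\<tau>. snd (c \<tau>)) t \<partial>lborel))"

text \<open>Rot(c) < infinity: E_c 1_[s,t] exists for all s<t and sup_{s<t} of its L-infinity norm is finite.\<close>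
definition CRot :: "(real \<Rightarrow> real \<times> real) set" where
  "CRot = {c. curve c \<and>
     (\<exists>M. \<forall>s t. s < t \<longrightarrow>
        (\<exists>F. E_rep c (indicator {s..t}) F) \<and>
        (\<forall>F. E_rep c (indicator {s..t}) F \<longrightarrow> (AE x in lborel. \<bar>F x\<bar> \<le> M)))}"

definition fj :: "(real \<times> real \<Rightarrow> real) \<Rightarrow> int \<Rightarrow> (real \<Rightarrow> real \<times> real) \<Rightarrow> real \<Rightarrow> real \<times> real \<Rightarrow> complex" where
  "fj \<rho>0 j c t x =
     of_real (deriv (\<lambda>\<tau>. snd (c \<tau>)) t) *
     (LBINT \<xi>=0..fst (c t). chi_check \<rho>0 j (fst x - \<xi>, snd x - snd (c t)))"

end

theory Submission
  imports Defs "HOL-Probability.Sinc_Integral"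
begin

text \<open>The pairing is bounded by the sup norm of \<open>S\<^sub>j E\<^sub>c 1\<^sub>[\<^sub>s\<^sub>,\<^sub>r\<^sub>1\<^sub>]\<close> times the L1 norm of
  \<open>f\<^sup>j\<^sub>c\<^sub>,\<^sub>r\<^sub>2\<close>. By Young's inequality the first factor is at most Rot(c) times the L1 norm of
  the kernel \<open>chi_check \<rho>\<^sub>0 j\<close>; the second is at most |c2'(r2)| c1(r2) times the same norm, because
  \<open>f\<^sup>j\<^sub>c\<^sub>,\<^sub>r\<close> integrates translates of the kernel along a horizontal segment of length c1(r).
  Both curve factors are bounded since c is smooth and constant outside [0, 1].
  The L1 norm of the kernel does not depend on j, since the kernel
  for j is the kernel for 0 rescaled by 2^j. It is finite because \<open>chi0 \<rho>\<^sub>0\<close> is smooth (near the origin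
  it equals \<open>1 - \<rho>\<^sub>0 - \<rho>\<^sub>0(\<cdot>/2)\<close>) and vanishes outside the unit ball, so integrating by parts twice
  in each variable bounds its inverse Fourier transform by a multiple of (1 + x1^2)^-1 (1 + x2^2)^-1.\<close>

abbreviation "e1 \<equiv> (1::real, 0::real)"
abbreviation "e2 \<equiv> (0::real, 1::real)"

lemma eventually_line_in_open:
  fixes x v :: "real \<times> real"
  assumes "open U" "x \<in> U"
  shows "eventually (\<lambda>t::real. x + t *\<^sub>R v \<in> U) (nhds 0)"
proof -
  have "open ((\<lambda>t::real. x + t *\<^sub>R v) -` U)"
    using assms(1) by (intro continuous_open_vimage continuous_intros)
  from eventually_nhds_in_open[OF this, of 0] show ?thesis using assms by simp
qed

lemma foldr_pderiv2_Cons: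
  "foldr pderiv2 (v # vs) f x = deriv (\<lambda>t. foldr pderiv2 vs f (x + t *\<^sub>R v)) 0"
  by (simp only: foldr_Cons o_apply) (rule pderiv2_def)

lemma foldr_pderiv2_eq_on_open:
  assumes "open U" "\<And>y. y \<in> U \<Longrightarrow> f y = h y" "x \<in> U"
  shows "foldr pderiv2 vs f x = foldr pderiv2 vs h x"
  using assms(3)
proof (induction vs arbitrary: x)
  case Nil then show ?case using assms by simp
next
  case (Cons v vs)
  have "eventually (\<lambda>t. foldr pderiv2 vs f (x + t *\<^sub>R v) = foldr pderiv2 vs h (x + t *\<^sub>R v)) (nhds 0)"
    using eventually_line_in_open[OF assms(1) Cons.prems] by eventually_elim (rule Cons.IH)
  then show ?case unfolding foldr_pderiv2_Cons by (rule deriv_cong_ev[OF _ refl])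
qed

lemma real_differentiable_cong_ev:
  fixes f g :: "real \<Rightarrow> real"
  assumes "eventually (\<lambda>t. f t = g t) (nhds x)" "g differentiable at x"
  shows "f differentiable at x"
proof -
  have "DERIV g x :> deriv g x" using assms(2) DERIV_deriv_iff_real_differentiable by blast
  then have "DERIV f x :> deriv g x" using DERIV_cong_ev[OF refl assms(1) refl] by simp
  then show ?thesis using real_differentiable_def by blast
qed

lemma smooth2_locally:
  assumes "\<And>x. \<exists>U h. open U \<and> x \<in> U \<and> smooth2 h \<and> (\<forall>y\<in>U. f y = h y)"
  shows "smooth2 f"
  unfolding smooth2_def
proof (intro allI impI conjI ballI)
  fix vs :: "(real \<times> real) list" assume vs: "set vs \<subseteq> {e1, e2}"
  show "continuous_on UNIV (foldr pderiv2 vs f)"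
  proof (rule continuous_at_imp_continuous_on, rule ballI)
    fix x :: "real \<times> real"
    obtain U h where U: "open U" "x \<in> U" "smooth2 h" "\<forall>y\<in>U. f y = h y" using assms by blast
    have "continuous_on UNIV (foldr pderiv2 vs h)" using U(3) vs unfolding smooth2_def by blast
    then have "isCont (foldr pderiv2 vs h) x" using continuous_on_eq_continuous_at[OF open_UNIV] by blast
    moreover have "eventually (\<lambda>y. foldr pderiv2 vs f y = foldr pderiv2 vs h y) (nhds x)"
      using eventually_nhds_in_open[OF U(1,2)]
      by eventually_elim (use foldr_pderiv2_eq_on_open[OF U(1)] U(4) in blast)
    ultimately show "isCont (foldr pderiv2 vs f) x" by (simp add: isCont_cong)
  qed
  fix v x assume v: "v \<in> {e1, e2}"
  obtain U h where U: "open U" "x \<in> U" "smooth2 h" "\<forall>y\<in>U. f y = h y" using assms by blast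
  have "eventually (\<lambda>t. foldr pderiv2 vs f (x + t *\<^sub>R v) = foldr pderiv2 vs h (x + t *\<^sub>R v)) (nhds 0)"
    using eventually_line_in_open[OF U(1,2), of v]
    by eventually_elim (use foldr_pderiv2_eq_on_open[OF U(1)] U(4) in blast)
  moreover have "(\<lambda>t. foldr pderiv2 vs h (x + t *\<^sub>R v)) differentiable at 0"
    using U(3) vs v unfolding smooth2_def by blast
  ultimately show "(\<lambda>t. foldr pderiv2 vs f (x + t *\<^sub>R v)) differentiable at 0"
    by (rule real_differentiable_cong_ev)
qed

lemma pderiv2_zero: "pderiv2 v (\<lambda>_. 0) = (\<lambda>_. 0)"
  by (simp add: pderiv2_def fun_eq_iff)

lemma foldr_pderiv2_zero: "foldr pderiv2 vs (\<lambda>_. 0) = (\<lambda>_. 0)"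
  by (induction vs) (simp_all add: pderiv2_zero)

lemma smooth2_zero: "smooth2 (\<lambda>_. 0)"
  unfolding smooth2_def foldr_pderiv2_zero by auto

lemma smooth2_continuous_on: "smooth2 f \<Longrightarrow> set vs \<subseteq> {e1, e2} \<Longrightarrow> continuous_on UNIV (foldr pderiv2 vs f)"
  unfolding smooth2_def by blast

lemma smooth2_has_real_derivative_line:
  assumes "smooth2 f" "set vs \<subseteq> {e1, e2}" "v \<in> {e1, e2}"
  shows "((\<lambda>t. foldr pderiv2 vs f (x + t *\<^sub>R v)) has_real_derivative foldr pderiv2 (v # vs) f x) (at 0)"
proof -
  have "(\<lambda>t. foldr pderiv2 vs f (x + t *\<^sub>R v)) differentiable at 0"
    using assms unfolding smooth2_def by blast
  then show ?thesis using DERIV_deriv_iff_real_differentiable by (simp add: pderiv2_def)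
qed

lemma smooth2_pderiv2:
  assumes "smooth2 f" "v \<in> {e1, e2}"
  shows "smooth2 (pderiv2 v f)"
proof -
  have *: "foldr pderiv2 vs (pderiv2 v f) = foldr pderiv2 (vs @ [v]) f" for vs by simp
  show ?thesis unfolding smooth2_def *
  proof (intro allI impI)
    fix vs :: "(real \<times> real) list" assume "set vs \<subseteq> {e1, e2}"
    then have "set (vs @ [v]) \<subseteq> {e1, e2}" using assms(2) by auto
    then show "continuous_on UNIV (foldr pderiv2 (vs @ [v]) f) \<and>
        (\<forall>w\<in>{e1, e2}. \<forall>x. (\<lambda>t. foldr pderiv2 (vs @ [v]) f (x + t *\<^sub>R w)) differentiable at 0)"
      using assms(1) unfolding smooth2_def by blast
  qed
qed

lemma has_real_derivative_lincomb_line: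
  assumes f: "smooth2 f" and g: "smooth2 g" and vs: "set vs \<subseteq> {e1, e2}" and v: "v \<in> {e1, e2}"
  shows "((\<lambda>t. k + a * foldr pderiv2 vs f (x + t *\<^sub>R v) + b * foldr pderiv2 vs g (x + t *\<^sub>R v))
    has_real_derivative (a * foldr pderiv2 (v # vs) f x + b * foldr pderiv2 (v # vs) g x)) (at 0)"
  using DERIV_add[OF DERIV_add[OF DERIV_const DERIV_cmult] DERIV_cmult,
      OF smooth2_has_real_derivative_line[OF f vs v] smooth2_has_real_derivative_line[OF g vs v]]
  by simp

lemma foldr_pderiv2_lincomb:
  assumes f: "smooth2 f" and g: "smooth2 g" and "set vs \<subseteq> {e1, e2}"
  shows "foldr pderiv2 vs (\<lambda>\<xi>. k + a * f \<xi> + b * g \<xi>) =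
    (\<lambda>\<xi>. (if vs = [] then k else 0) + a * foldr pderiv2 vs f \<xi> + b * foldr pderiv2 vs g \<xi>)"
  using assms(3)
proof (induction vs)
  case Nil then show ?case by simp
next
  case (Cons v vs)
  then have vs: "set vs \<subseteq> {e1, e2}" and v: "v \<in> {e1, e2}" by auto
  show ?case
  proof
    fix x
    show "foldr pderiv2 (v # vs) (\<lambda>\<xi>. k + a * f \<xi> + b * g \<xi>) x =
        (if v # vs = [] then k else 0) + a * foldr pderiv2 (v # vs) f x + b * foldr pderiv2 (v # vs) g x"
      using DERIV_imp_deriv[OF has_real_derivative_lincomb_line[OF f g vs v, of "if vs = [] then k else 0"]]
      unfolding foldr_pderiv2_Cons Cons.IH[OF vs] by simp
  qed
qed

lemma smooth2_lincomb:
  assumes f: "smooth2 f" and g: "smooth2 g"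
  shows "smooth2 (\<lambda>\<xi>. k + a * f \<xi> + b * g \<xi>)"
  unfolding smooth2_def
proof (intro allI impI conjI ballI)
  fix vs :: "(real \<times> real) list" assume vs: "set vs \<subseteq> {e1, e2}"
  show "continuous_on UNIV (foldr pderiv2 vs (\<lambda>\<xi>. k + a * f \<xi> + b * g \<xi>))"
    unfolding foldr_pderiv2_lincomb[OF f g vs]
    by (intro continuous_intros smooth2_continuous_on f g vs)
  fix v x assume v: "v \<in> {e1, e2}"
  show "(\<lambda>t. foldr pderiv2 vs (\<lambda>\<xi>. k + a * f \<xi> + b * g \<xi>) (x + t *\<^sub>R v)) differentiable at 0"
    unfolding foldr_pderiv2_lincomb[OF f g vs]
    using has_real_derivative_lincomb_line[OF f g vs v] real_differentiable_def by blast
qed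

lemma has_real_derivative_scaled_line:
  assumes f: "smooth2 f" and "set vs \<subseteq> {e1, e2}" "v \<in> {e1, e2}"
  shows "((\<lambda>t. c * foldr pderiv2 vs f (a *\<^sub>R (x + t *\<^sub>R v)))
    has_real_derivative (c * a * foldr pderiv2 (v # vs) f (a *\<^sub>R x))) (at 0)"
proof -
  have "((\<lambda>s. foldr pderiv2 vs f (a *\<^sub>R x + s *\<^sub>R v)) has_real_derivative foldr pderiv2 (v # vs) f (a *\<^sub>R x))
      (at ((\<lambda>t. a * t) 0))"
    using smooth2_has_real_derivative_line[OF assms] by simp
  from DERIV_chain2[OF this DERIV_cmult_Id[of a 0]]
  have "((\<lambda>t. foldr pderiv2 vs f (a *\<^sub>R x + (a * t) *\<^sub>R v)) has_real_derivative
      foldr pderiv2 (v # vs) f (a *\<^sub>R x) * a) (at 0)" by simp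
  from DERIV_cmult[OF this, of c] show ?thesis by (simp add: scaleR_add_right algebra_simps)
qed

lemma foldr_pderiv2_scale:
  assumes f: "smooth2 f" and "set vs \<subseteq> {e1, e2}"
  shows "foldr pderiv2 vs (\<lambda>\<xi>. f (a *\<^sub>R \<xi>)) = (\<lambda>\<xi>. a ^ length vs * foldr pderiv2 vs f (a *\<^sub>R \<xi>))"
  using assms(2)
proof (induction vs)
  case Nil then show ?case by simp
next
  case (Cons v vs)
  then have vs: "set vs \<subseteq> {e1, e2}" and v: "v \<in> {e1, e2}" by auto
  show ?case
  proof
    fix \<xi>
    have "foldr pderiv2 (v # vs) (\<lambda>\<xi>. f (a *\<^sub>R \<xi>)) \<xi> =
        deriv (\<lambda>t. a ^ length vs * foldr pderiv2 vs f (a *\<^sub>R (\<xi> + t *\<^sub>R v))) 0"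
      unfolding foldr_pderiv2_Cons Cons.IH[OF vs] ..
    also have "\<dots> = a ^ length vs * a * foldr pderiv2 (v # vs) f (a *\<^sub>R \<xi>)"
      by (rule DERIV_imp_deriv[OF has_real_derivative_scaled_line[OF f vs v]])
    finally show "foldr pderiv2 (v # vs) (\<lambda>\<xi>. f (a *\<^sub>R \<xi>)) \<xi> =
        a ^ length (v # vs) * foldr pderiv2 (v # vs) f (a *\<^sub>R \<xi>)"
      by (simp add: algebra_simps)
  qed
qed

lemma smooth2_scale:
  assumes f: "smooth2 f"
  shows "smooth2 (\<lambda>\<xi>. f (a *\<^sub>R \<xi>))"
  unfolding smooth2_def
proof (intro allI impI conjI ballI)
  fix vs :: "(real \<times> real) list" assume vs: "set vs \<subseteq> {e1, e2}"
  show "continuous_on UNIV (foldr pderiv2 vs (\<lambda>\<xi>. f (a *\<^sub>R \<xi>)))"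
    unfolding foldr_pderiv2_scale[OF f vs]
    by (intro continuous_intros continuous_on_compose2[OF smooth2_continuous_on[OF f vs]]) auto
  fix v x assume v: "v \<in> {e1, e2}"
  show "(\<lambda>t. foldr pderiv2 vs (\<lambda>\<xi>. f (a *\<^sub>R \<xi>)) (x + t *\<^sub>R v)) differentiable at 0"
    unfolding foldr_pderiv2_scale[OF f vs]
    using has_real_derivative_scaled_line[OF f vs v] real_differentiable_def by blast
qed

lemma LP_profile_smooth2: "LP_profile \<rho> \<Longrightarrow> smooth2 \<rho>"
  unfolding LP_profile_def by blast

lemma LP_profile_vanishes:
  assumes "LP_profile \<rho>" "norm \<xi> < 6/7 \<or> 2 < norm \<xi>"
  shows "\<rho> \<xi> = 0"
proof (rule ccontr)
  assume "\<rho> \<xi> \<noteq> 0"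
  then have "6/7 \<le> norm \<xi> \<and> norm \<xi> \<le> 2" using assms(1) unfolding LP_profile_def by blast
  with assms(2) show False by linarith
qed

text \<open>For \<open>|\<xi>| < 24/7\<close> only the terms \<open>j = 0, 1\<close> of the partition of unity with \<open>j \<ge> 0\<close> survive.\<close>

lemma chi0_eq_near_origin:
  assumes lp: "LP_profile \<rho>" and n: "norm \<xi> < 24/7"
  shows "chi0 \<rho> \<xi> = 1 - \<rho> \<xi> - \<rho> ((1/2) *\<^sub>R \<xi>)"
proof (cases "\<xi> = 0")
  case True then show ?thesis using LP_profile_vanishes[OF lp, of 0] by (simp add: chi0_def)
next
  case False
  define f where "f = (\<lambda>j::int. \<rho> (2 powr (- real_of_int j) *\<^sub>R \<xi>))"
  have all: "(f has_sum 1) UNIV" using lp False unfolding LP_profile_def f_def by blast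
  have "f j = 0" if "j \<in> {0..} - {0, 1}" for j
  proof -
    from that have "2 powr (- real_of_int j) \<le> 2 powr (-2)" by (intro powr_mono) auto
    then have "2 powr (- real_of_int j) \<le> 1/4" by (simp add: powr_minus powr_numeral)
    then have "2 powr (- real_of_int j) * norm \<xi> \<le> 1/4 * norm \<xi>" by (intro mult_right_mono) auto
    then show ?thesis unfolding f_def using n by (intro LP_profile_vanishes[OF lp]) auto
  qed
  moreover have "(f has_sum (sum f {0, 1})) {0, 1}" by (rule has_sum_finite) simp
  ultimately have "(f has_sum (sum f {0, 1})) {0..}"
    using has_sum_cong_neutral[where T="{0, 1}" and g=f and f=f and S="{0..}"] by auto
  then have "(f has_sum (\<rho> \<xi> + \<rho> ((1/2) *\<^sub>R \<xi>))) {0..}"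
    by (simp add: f_def powr_minus)
  moreover have "UNIV - {0::int..} = {..-1}" by auto
  ultimately have "(f has_sum (1 - (\<rho> \<xi> + \<rho> ((1/2) *\<^sub>R \<xi>)))) {..-1}"
    using has_sum_Diff[OF all] by fastforce
  then show ?thesis using False by (simp add: chi0_def f_def infsumI)
qed

lemma chi0_eq_0_outside_unit_ball:
  assumes lp: "LP_profile \<rho>" and n: "1 < norm \<xi>"
  shows "chi0 \<rho> \<xi> = 0"
proof -
  have "\<rho> (2 powr (- real_of_int j) *\<^sub>R \<xi>) = 0" if "j \<le> -1" for j :: int
  proof -
    from that have "2 powr 1 \<le> 2 powr (- real_of_int j)" by (intro powr_mono) auto
    then have "2 * norm \<xi> \<le> 2 powr (- real_of_int j) * norm \<xi>" by (intro mult_right_mono) auto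
    then show ?thesis using n by (intro LP_profile_vanishes[OF lp]) auto
  qed
  then show ?thesis using n by (auto simp: chi0_def intro!: infsum_0)
qed

lemma smooth2_chi0:
  assumes lp: "LP_profile \<rho>"
  shows "smooth2 (chi0 \<rho>)"
proof (rule smooth2_locally)
  fix x :: "real \<times> real"
  have near: "smooth2 (\<lambda>\<xi>. 1 + (-1) * \<rho> \<xi> + (-1) * \<rho> ((1/2) *\<^sub>R \<xi>))"
    by (intro smooth2_lincomb smooth2_scale LP_profile_smooth2[OF lp])
  have opens: "open (ball (0::real \<times> real) (24/7))" "open (- cball (0::real \<times> real) 1)" by auto
  show "\<exists>U h. open U \<and> x \<in> U \<and> smooth2 h \<and> (\<forall>y\<in>U. chi0 \<rho> y = h y)"
  proof (cases "norm x < 24/7")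
    case True
    with near opens show ?thesis
      by (intro exI[of _ "ball 0 (24/7)"] exI[of _ "\<lambda>\<xi>. 1 + (-1) * \<rho> \<xi> + (-1) * \<rho> ((1/2) *\<^sub>R \<xi>)"])
         (auto simp: chi0_eq_near_origin[OF lp])
  next
    case False
    then show ?thesis using smooth2_zero opens
      by (intro exI[of _ "- cball 0 1"] exI[of _ "\<lambda>_. 0"]) (auto simp: chi0_eq_0_outside_unit_ball[OF lp])
  qed
qed

definition smooth2_supp_ball :: "(real \<times> real \<Rightarrow> real) \<Rightarrow> bool" where
  "smooth2_supp_ball h \<longleftrightarrow> smooth2 h \<and> (\<forall>\<xi>. 1 < norm \<xi> \<longrightarrow> h \<xi> = 0)"

lemma smooth2_supp_ball_vanishes: "smooth2_supp_ball h \<Longrightarrow> 1 < norm \<xi> \<Longrightarrow> h \<xi> = 0"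
  unfolding smooth2_supp_ball_def by blast

lemma smooth2_supp_ball_chi0: "LP_profile \<rho> \<Longrightarrow> smooth2_supp_ball (chi0 \<rho>)"
  unfolding smooth2_supp_ball_def using smooth2_chi0 chi0_eq_0_outside_unit_ball by blast

lemma smooth2_supp_ball_pderiv2:
  assumes h: "smooth2_supp_ball h" and v: "v \<in> {e1, e2}"
  shows "smooth2_supp_ball (pderiv2 v h)"
proof -
  have "pderiv2 v h \<xi> = 0" if "1 < norm \<xi>" for \<xi>
  proof -
    have "h y = 0" if "y \<in> - cball 0 1" for y
      using that smooth2_supp_ball_vanishes[OF h] by (simp add: not_le)
    then have "foldr pderiv2 [v] h \<xi> = foldr pderiv2 [v] (\<lambda>_. 0) \<xi>"
      using that by (intro foldr_pderiv2_eq_on_open[where U="- cball 0 1"]) auto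
    then show ?thesis by (simp add: pderiv2_zero)
  qed
  then show ?thesis using h v smooth2_pderiv2 unfolding smooth2_supp_ball_def by blast
qed

lemma smooth2_supp_ball_continuous: "smooth2_supp_ball h \<Longrightarrow> continuous_on UNIV h"
  using smooth2_continuous_on[of h "[]"] by (simp add: smooth2_supp_ball_def)

lemma integrable_continuous_vanishing_outside_compact:
  fixes f :: "'a::euclidean_space \<Rightarrow> 'b::{banach,second_countable_topology}"
  assumes "continuous_on UNIV f" "\<And>x. x \<notin> S \<Longrightarrow> f x = 0" "compact S"
  shows "integrable lborel f"
proof -
  have "integrable lborel (\<lambda>x. indicator S x *\<^sub>R f x)"
    by (rule borel_integrable_compact[OF assms(3)]) (rule continuous_on_subset[OF assms(1)], simp)
  moreover have "(\<lambda>x. indicator S x *\<^sub>R f x) = f" using assms(2) by (auto simp: indicator_def fun_eq_iff)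
  ultimately show ?thesis by simp
qed

lemma integrable_smooth2_supp_ball:
  assumes h: "smooth2_supp_ball h" and g: "continuous_on UNIV g"
  shows "integrable lborel (\<lambda>\<xi>. complex_of_real (h \<xi>) * g \<xi>)" "integrable lborel (\<lambda>\<xi>. \<bar>h \<xi>\<bar>)"
  using smooth2_supp_ball_continuous[OF h] h g
  by (auto intro!: integrable_continuous_vanishing_outside_compact[where S="cball 0 1"] continuous_intros
      simp: smooth2_supp_ball_def)

definition fourier_cis :: "real \<times> real \<Rightarrow> (real \<times> real \<Rightarrow> real) \<Rightarrow> complex" where
  "fourier_cis x h = (\<integral>\<xi>. complex_of_real (h \<xi>) * cis (x \<bullet> \<xi>) \<partial>lborel)"

lemma norm_fourier_cis_le: "cmod (fourier_cis x h) \<le> (\<integral>\<xi>. \<bar>h \<xi>\<bar> \<partial>lborel)"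
proof -
  have "cmod (fourier_cis x h) \<le> (\<integral>\<xi>. cmod (complex_of_real (h \<xi>) * cis (x \<bullet> \<xi>)) \<partial>lborel)"
    unfolding fourier_cis_def by (rule integral_norm_bound)
  then show ?thesis by (simp add: norm_mult)
qed

lemma has_vector_derivative_cis_affine:
  "((\<lambda>a. cis (u * a + c)) has_vector_derivative (\<i> * of_real u * cis (u * a + c))) (at a within S)"
proof -
  have "((\<lambda>z. exp (\<i> * (of_real u * z + of_real c))) has_field_derivative
     (exp (\<i> * (of_real u * of_real a + of_real c)) * (\<i> * of_real u))) (at (of_real a))"
    by (auto intro!: derivative_eq_intros)
  from has_vector_derivative_real_field[OF this, of S] show ?thesis
    by (simp add: cis_conv_exp algebra_simps)
qed

lemma lborel_integral_derivative_eq_0: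
  fixes \<psi> \<psi>' :: "real \<Rightarrow> complex"
  assumes "\<And>a. (\<psi> has_vector_derivative \<psi>' a) (at a)" "continuous_on UNIV \<psi>'"
    and "\<And>a. R < \<bar>a\<bar> \<Longrightarrow> \<psi> a = 0" "\<And>a. R < \<bar>a\<bar> \<Longrightarrow> \<psi>' a = 0"
  shows "integral\<^sup>L lborel \<psi>' = 0"
proof -
  define L where "L = \<bar>R\<bar> + 1"
  have "(\<psi>' has_integral (\<psi> L - \<psi> (-L))) {-L..L}"
    by (rule fundamental_theorem_of_calculus)
       (auto simp: L_def intro: has_vector_derivative_at_within assms(1))
  then have "(\<psi>' has_integral 0) {-L..L}" using assms(3)[of L] assms(3)[of "-L"] by (simp add: L_def)
  then have "(\<psi>' has_integral 0) UNIV" by (rule has_integral_on_superset) (use assms(4) in \<open>auto simp: L_def\<close>)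
  moreover have "integrable lborel \<psi>'"
    by (rule integrable_continuous_vanishing_outside_compact[where S="{-L..L}"])
       (use assms(2,4) in \<open>auto simp: L_def\<close>)
  then have "(\<psi>' has_integral integral\<^sup>L lborel \<psi>') UNIV" by (rule has_integral_integral_lborel)
  ultimately show ?thesis using has_integral_unique by metis
qed

lemma has_real_derivative_coordinate_line:
  assumes h: "smooth2 h" and v: "v \<in> {e1, e2}"
  shows "((\<lambda>t. h (p + t *\<^sub>R v)) has_real_derivative pderiv2 v h (p + a *\<^sub>R v)) (at a)"
proof -
  have "((\<lambda>s. h ((p + a *\<^sub>R v) + s *\<^sub>R v)) has_real_derivative pderiv2 v h (p + a *\<^sub>R v)) (at 0)"
    using smooth2_has_real_derivative_line[OF h _ v, of "[]"] by simp
  moreover have "(p + a *\<^sub>R v) + s *\<^sub>R v = p + (s + a) *\<^sub>R v" for s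
    by (simp add: scaleR_add_left algebra_simps)
  ultimately have "((\<lambda>s. h (p + (s + a) *\<^sub>R v)) has_real_derivative pderiv2 v h (p + a *\<^sub>R v)) (at 0)"
    by simp
  then show ?thesis using DERIV_shift[of "\<lambda>t. h (p + t *\<^sub>R v)" _ 0 a] by simp
qed

lemma fourier_line_integral_pderiv2:
  assumes h: "smooth2_supp_ball h" and v: "v \<in> {e1, e2}"
  shows "(\<integral>t. complex_of_real (pderiv2 v h (p + t *\<^sub>R v)) * cis (x \<bullet> (p + t *\<^sub>R v))
    + \<i> * of_real (x \<bullet> v) * (complex_of_real (h (p + t *\<^sub>R v)) * cis (x \<bullet> (p + t *\<^sub>R v))) \<partial>lborel) = 0"
proof -
  have h': "smooth2_supp_ball (pderiv2 v h)" by (rule smooth2_supp_ball_pderiv2[OF h v])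
  have cis_eq: "x \<bullet> (p + t *\<^sub>R v) = (x \<bullet> v) * t + x \<bullet> p" for t
    by (simp add: inner_add_right)
  have far: "1 < norm (p + t *\<^sub>R v)" if "norm p + 1 < \<bar>t\<bar>" for t
  proof -
    have "norm (t *\<^sub>R v) \<le> norm (p + t *\<^sub>R v) + norm p" using norm_triangle_ineq4[of "p + t *\<^sub>R v" p] by simp
    moreover have "norm (t *\<^sub>R v) = \<bar>t\<bar>" using v by auto
    ultimately show ?thesis using that by linarith
  qed
  show ?thesis
  proof (rule lborel_integral_derivative_eq_0[where R="norm p + 1"])
    fix a
    show "((\<lambda>t. complex_of_real (h (p + t *\<^sub>R v)) * cis ((x \<bullet> v) * t + x \<bullet> p)) has_vector_derivative
        complex_of_real (pderiv2 v h (p + a *\<^sub>R v)) * cis (x \<bullet> (p + a *\<^sub>R v))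
        + \<i> * of_real (x \<bullet> v) * (complex_of_real (h (p + a *\<^sub>R v)) * cis (x \<bullet> (p + a *\<^sub>R v)))) (at a)"
      by (rule has_vector_derivative_eq_rhs[OF has_vector_derivative_mult[OF has_vector_derivative_of_real[OF
          has_real_derivative_coordinate_line[OF h[unfolded smooth2_supp_ball_def, THEN conjunct1] v]]
          has_vector_derivative_cis_affine]])
         (unfold cis_eq, simp add: algebra_simps)
  next
    show "continuous_on UNIV (\<lambda>t. complex_of_real (pderiv2 v h (p + t *\<^sub>R v)) * cis (x \<bullet> (p + t *\<^sub>R v))
        + \<i> * of_real (x \<bullet> v) * (complex_of_real (h (p + t *\<^sub>R v)) * cis (x \<bullet> (p + t *\<^sub>R v))))"
    proof -
      have "continuous_on UNIV (\<lambda>t. h (p + t *\<^sub>R v))" "continuous_on UNIV (\<lambda>t. pderiv2 v h (p + t *\<^sub>R v))"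
        by (rule continuous_on_compose2[OF smooth2_supp_ball_continuous[OF h]]
            continuous_on_compose2[OF smooth2_supp_ball_continuous[OF h']]; auto intro!: continuous_intros)+
      then show ?thesis by (intro continuous_intros)
    qed
  qed (use far smooth2_supp_ball_vanishes[OF h] smooth2_supp_ball_vanishes[OF h'] in auto)
qed

lemma lborel_integral_eq_0_if_coordinate_lines:
  fixes \<phi> :: "real \<times> real \<Rightarrow> complex"
  assumes i: "integrable lborel \<phi>" and v: "v \<in> {e1, e2}" and lines: "\<And>p. (\<integral>t. \<phi> (p + t *\<^sub>R v) \<partial>lborel) = 0"
  shows "integral\<^sup>L lborel \<phi> = 0"
proof -
  have i': "integrable (lborel \<Otimes>\<^sub>M lborel) (\<lambda>(a, b). \<phi> (a, b))" using i by (simp add: lborel_prod)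
  have "integral\<^sup>L lborel \<phi> = integral\<^sup>L (lborel \<Otimes>\<^sub>M lborel) (\<lambda>(a, b). \<phi> (a, b))"
    by (simp add: lborel_prod)
  also have "\<dots> = 0"
  proof (cases "v = e1")
    case True
    have "(\<integral>a. \<phi> (a, b) \<partial>lborel) = 0" for b using lines[of "(0, b)"] by (simp add: True)
    then show ?thesis using lborel_pair.integral_snd[OF i'] by simp
  next
    case False
    then have "v = e2" using v by simp
    then have "(\<integral>b. \<phi> (a, b) \<partial>lborel) = 0" for a using lines[of "(a, 0)"] by simp
    then show ?thesis using lborel_pair.integral_fst[OF i'] by simp
  qed
  finally show ?thesis .
qed

lemma fourier_cis_pderiv2:
  assumes h: "smooth2_supp_ball h" and v: "v \<in> {e1, e2}"
  shows "fourier_cis x (pderiv2 v h) = - (\<i> * of_real (x \<bullet> v)) * fourier_cis x h"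
proof -
  have h': "smooth2_supp_ball (pderiv2 v h)" by (rule smooth2_supp_ball_pderiv2[OF h v])
  have cis: "continuous_on UNIV (\<lambda>\<xi>. cis (x \<bullet> \<xi>))" by (intro continuous_intros)
  note i = integrable_smooth2_supp_ball(1)[OF h cis] integrable_smooth2_supp_ball(1)[OF h' cis]
  have "(\<integral>\<xi>. complex_of_real (pderiv2 v h \<xi>) * cis (x \<bullet> \<xi>)
      + \<i> * of_real (x \<bullet> v) * (complex_of_real (h \<xi>) * cis (x \<bullet> \<xi>)) \<partial>lborel) = 0"
    by (rule lborel_integral_eq_0_if_coordinate_lines[OF _ v fourier_line_integral_pderiv2[OF h v]])
       (use i in simp)
  moreover have "(\<integral>\<xi>. complex_of_real (pderiv2 v h \<xi>) * cis (x \<bullet> \<xi>)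
      + \<i> * of_real (x \<bullet> v) * (complex_of_real (h \<xi>) * cis (x \<bullet> \<xi>)) \<partial>lborel) =
      fourier_cis x (pderiv2 v h) + \<i> * of_real (x \<bullet> v) * fourier_cis x h"
    unfolding fourier_cis_def using i by (simp add: integral_add)
  ultimately have "fourier_cis x (pderiv2 v h) + \<i> * of_real (x \<bullet> v) * fourier_cis x h = 0" by simp
  then show ?thesis by (simp add: eq_neg_iff_add_eq_0)
qed

lemma fourier_cis_weighted:
  assumes h: "smooth2_supp_ball h"
  shows "complex_of_real ((1 + (fst x)\<^sup>2) * (1 + (snd x)\<^sup>2)) * fourier_cis x h =
    fourier_cis x h - fourier_cis x (pderiv2 e1 (pderiv2 e1 h)) - fourier_cis x (pderiv2 e2 (pderiv2 e2 h))
    + fourier_cis x (pderiv2 e2 (pderiv2 e2 (pderiv2 e1 (pderiv2 e1 h))))"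
proof -
  have x: "x \<bullet> e1 = fst x" "x \<bullet> e2 = snd x" by (cases x; simp)+
  have h1: "smooth2_supp_ball (pderiv2 e1 h)" and h11: "smooth2_supp_ball (pderiv2 e1 (pderiv2 e1 h))"
    and h2: "smooth2_supp_ball (pderiv2 e2 h)"
    and h112: "smooth2_supp_ball (pderiv2 e2 (pderiv2 e1 (pderiv2 e1 h)))"
    using h by (auto intro!: smooth2_supp_ball_pderiv2)
  note d1 = fourier_cis_pderiv2[of _ e1 x, simplified x] and d2 = fourier_cis_pderiv2[of _ e2 x, simplified x]
  show ?thesis
    using d1[OF h1] d1[OF h] d2[OF h2] d2[OF h] d2[OF h112] d2[OF h11]
    by (simp add: power2_eq_square algebra_simps)
qed

definition cauchy_weight :: "real \<times> real \<Rightarrow> real" where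
  "cauchy_weight x = inverse (1 + (fst x)\<^sup>2) * inverse (1 + (snd x)\<^sup>2)"

lemma cauchy_weight_nonneg: "0 \<le> cauchy_weight x"
  by (simp add: cauchy_weight_def)

lemma fourier_cis_decay:
  assumes h: "smooth2_supp_ball h"
  obtains B where "\<And>x. cmod (fourier_cis x h) \<le> B * cauchy_weight x"
proof
  let ?d1 = "pderiv2 e1 (pderiv2 e1 h)" and ?d2 = "pderiv2 e2 (pderiv2 e2 h)"
  let ?d12 = "pderiv2 e2 (pderiv2 e2 ?d1)"
  define B where "B = (\<integral>\<xi>. \<bar>h \<xi>\<bar> \<partial>lborel) + (\<integral>\<xi>. \<bar>?d1 \<xi>\<bar> \<partial>lborel)
    + (\<integral>\<xi>. \<bar>?d2 \<xi>\<bar> \<partial>lborel) + (\<integral>\<xi>. \<bar>?d12 \<xi>\<bar> \<partial>lborel)"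
  fix x :: "real \<times> real"
  define P where "P = (1 + (fst x)\<^sup>2) * (1 + (snd x)\<^sup>2)"
  have P: "0 < P" unfolding P_def by (intro mult_pos_pos) (auto intro: add_pos_nonneg)
  have "P * cmod (fourier_cis x h) = cmod (complex_of_real P * fourier_cis x h)"
    using P by (simp add: norm_mult)
  also have "\<dots> \<le> B"
    unfolding P_def fourier_cis_weighted[OF h] B_def
    using norm_fourier_cis_le[of x h] norm_fourier_cis_le[of x ?d1]
      norm_fourier_cis_le[of x ?d2] norm_fourier_cis_le[of x ?d12]
    by (smt (verit, best) norm_diff_ineq norm_triangle_ineq4 norm_triangle_ineq)
  finally show "cmod (fourier_cis x h) \<le> B * cauchy_weight x"
    using P by (simp add: cauchy_weight_def P_def field_simps)
qed

lemma integrable_cauchy_weight: "integrable lborel cauchy_weight"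
proof -
  let ?g = "\<lambda>a::real. inverse (1 + a\<^sup>2)"
  have "integrable lborel ?g"
    using integrable_inverse_1_plus_square by (simp add: set_integrable_def einterval_def)
  then have g: "(\<integral>\<^sup>+a. ennreal (?g a) \<partial>lborel) < \<infinity>"
    by (simp add: integrable_iff_bounded)
  have m: "(\<lambda>x::real \<times> real. ennreal (?g (fst x) * ?g (snd x))) \<in> borel_measurable (lborel \<Otimes>\<^sub>M lborel)"
    by measurable
  have "(\<integral>\<^sup>+x. ennreal (cauchy_weight x) \<partial>lborel) = (\<integral>\<^sup>+a. \<integral>\<^sup>+b. ennreal (?g a * ?g b) \<partial>lborel \<partial>lborel)"
    using lborel.nn_integral_fst[OF m] by (simp add: cauchy_weight_def lborel_prod)
  also have "\<dots> = (\<integral>\<^sup>+a. ennreal (?g a) * (\<integral>\<^sup>+b. ennreal (?g b) \<partial>lborel) \<partial>lborel)"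
    by (intro nn_integral_cong) (simp add: ennreal_mult nn_integral_cmult)
  also have "\<dots> = (\<integral>\<^sup>+a. ennreal (?g a) \<partial>lborel) * (\<integral>\<^sup>+b. ennreal (?g b) \<partial>lborel)"
    by (simp add: nn_integral_multc)
  also have "\<dots> < \<infinity>" using g by (simp add: ennreal_mult_less_top)
  moreover have "cauchy_weight \<in> borel_measurable borel"
    unfolding cauchy_weight_def
    by (intro borel_measurable_continuous_onI continuous_intros) (auto simp: add_nonneg_eq_0_iff)
  ultimately show ?thesis
    by (simp add: integrable_iff_bounded cauchy_weight_nonneg)
qed

lemma nn_integral_lborel_affine:
  fixes f :: "'a::euclidean_space \<Rightarrow> ennreal"
  assumes [measurable]: "f \<in> borel_measurable borel" and c: "c \<noteq> 0"
  shows "(\<integral>\<^sup>+x. f x \<partial>lborel) = ennreal (\<bar>c\<bar> ^ DIM('a)) * (\<integral>\<^sup>+x. f (t + c *\<^sub>R x) \<partial>lborel)"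
  by (subst lborel_affine[OF c, of t])
     (simp add: nn_integral_density nn_integral_distr nn_integral_cmult)

lemma lborel_integral_affine:
  fixes f :: "'a::euclidean_space \<Rightarrow> 'b::{banach,second_countable_topology}"
  assumes [measurable]: "f \<in> borel_measurable borel" and c: "c \<noteq> 0"
  shows "integral\<^sup>L lborel f = (\<bar>c\<bar> ^ DIM('a)) *\<^sub>R integral\<^sup>L lborel (\<lambda>x. f (t + c *\<^sub>R x))"
  by (subst lborel_affine[OF c, of t]) (simp add: integral_density integral_distr)

lemma continuous_on_chi: "LP_profile \<rho> \<Longrightarrow> continuous_on UNIV (chi \<rho> j)"
  unfolding chi_def[abs_def]
  by (rule continuous_on_compose2[OF smooth2_supp_ball_continuous[OF smooth2_supp_ball_chi0]])
     (auto intro!: continuous_intros)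

lemma borel_measurable_chi_check:
  assumes lp: "LP_profile \<rho>"
  shows "chi_check \<rho> j \<in> borel_measurable borel"
proof -
  define F where "F = (\<lambda>p::(real \<times> real) \<times> (real \<times> real). complex_of_real (chi \<rho> j (snd p)) * cis (fst p \<bullet> snd p))"
  have "continuous_on UNIV F" unfolding F_def
    by (intro continuous_intros continuous_on_compose2[OF continuous_on_chi[OF lp]]) auto
  then have "case_prod (\<lambda>x \<xi>. F (x, \<xi>)) \<in> borel_measurable (lborel \<Otimes>\<^sub>M lborel)"
    by (simp add: lborel_prod borel_measurable_continuous_onI)
  from lborel.borel_measurable_lebesgue_integral[OF this]
  have "(\<lambda>x. \<integral>\<xi>. F (x, \<xi>) \<partial>lborel) \<in> borel_measurable borel" by simp
  moreover have "chi_check \<rho> j = (\<lambda>x. (1 / (2 * pi)^2) *\<^sub>R (\<integral>\<xi>. F (x, \<xi>) \<partial>lborel))"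
    unfolding chi_check_def[abs_def] F_def by simp
  ultimately show ?thesis by simp
qed

lemma chi_check_scale:
  assumes lp: "LP_profile \<rho>"
  shows "chi_check \<rho> j x = ((2 powr j)\<^sup>2) *\<^sub>R chi_check \<rho> 0 ((2 powr j) *\<^sub>R x)"
proof -
  define c where "c = 2 powr real_of_int j"
  have c: "0 < c" and cc: "2 powr (- real_of_int j) * c = 1"
    unfolding c_def by (simp_all add: powr_add[symmetric])
  define f where "f = (\<lambda>\<xi>. complex_of_real (chi \<rho> j \<xi>) * cis (x \<bullet> \<xi>))"
  have "f \<in> borel_measurable borel" unfolding f_def
    by (intro borel_measurable_continuous_onI continuous_intros continuous_on_compose2[OF continuous_on_chi[OF lp]]) auto
  from lborel_integral_affine[OF this, of c 0] c
  have "integral\<^sup>L lborel f = c\<^sup>2 *\<^sub>R (\<integral>\<eta>. complex_of_real (chi \<rho> 0 \<eta>) * cis ((c *\<^sub>R x) \<bullet> \<eta>) \<partial>lborel)"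
    by (simp add: f_def chi_def cc power2_eq_square)
  then show ?thesis unfolding chi_check_def f_def c_def by simp
qed

lemma chi_check_0_eq: "chi_check \<rho> 0 x = (1 / (2 * pi)^2) *\<^sub>R fourier_cis x (chi0 \<rho>)"
  unfolding chi_check_def fourier_cis_def chi_def by simp

lemma integrable_chi_check_0:
  assumes lp: "LP_profile \<rho>"
  shows "integrable lborel (chi_check \<rho> 0)"
proof -
  obtain B where B: "\<And>x. cmod (fourier_cis x (chi0 \<rho>)) \<le> B * cauchy_weight x"
    using fourier_cis_decay[OF smooth2_supp_ball_chi0[OF lp]] by blast
  show ?thesis
  proof (rule Bochner_Integration.integrable_bound)
    show "integrable lborel (\<lambda>x. (1 / (2 * pi)^2 * B) * cauchy_weight x)"
      by (intro integrable_mult_right integrable_cauchy_weight)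
    show "chi_check \<rho> 0 \<in> borel_measurable lborel" using borel_measurable_chi_check[OF lp] by simp
    show "AE x in lborel. norm (chi_check \<rho> 0 x) \<le> norm ((1 / (2 * pi)^2 * B) * cauchy_weight x)"
    proof (intro AE_I2)
      fix x
      have "norm (chi_check \<rho> 0 x) \<le> (1 / (2 * pi)^2) * (B * cauchy_weight x)"
        unfolding chi_check_0_eq by (simp add: B divide_right_mono)
      then show "norm (chi_check \<rho> 0 x) \<le> norm ((1 / (2 * pi)^2 * B) * cauchy_weight x)"
        using abs_ge_self[of "1 / (2 * pi)^2 * B * cauchy_weight x"]
        by (simp only: real_norm_def mult.assoc)
    qed
  qed
qed

definition chi_check_L1 :: "(real \<times> real \<Rightarrow> real) \<Rightarrow> real" where
  "chi_check_L1 \<rho> = enn2real (\<integral>\<^sup>+x. ennreal (cmod (chi_check \<rho> 0 x)) \<partial>lborel)"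

lemma nn_integral_norm_chi_check:
  assumes lp: "LP_profile \<rho>"
  shows "(\<integral>\<^sup>+x. ennreal (cmod (chi_check \<rho> j x)) \<partial>lborel) = ennreal (chi_check_L1 \<rho>)"
proof -
  define c where "c = 2 powr real_of_int j"
  have c: "0 < c" unfolding c_def by simp
  have m: "(\<lambda>y. ennreal (cmod (chi_check \<rho> 0 y))) \<in> borel_measurable borel"
    using borel_measurable_chi_check[OF lp, of 0] by measurable
  have "(\<integral>\<^sup>+x. ennreal (cmod (chi_check \<rho> j x)) \<partial>lborel) =
      (\<integral>\<^sup>+x. ennreal (c\<^sup>2) * ennreal (cmod (chi_check \<rho> 0 (c *\<^sub>R x))) \<partial>lborel)"
    by (intro nn_integral_cong) (simp add: chi_check_scale[OF lp, of j] c_def[symmetric] ennreal_mult'' c)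
  also have "\<dots> = ennreal (c\<^sup>2) * (\<integral>\<^sup>+x. ennreal (cmod (chi_check \<rho> 0 (c *\<^sub>R x))) \<partial>lborel)"
    by (rule nn_integral_cmult) (use borel_measurable_chi_check[OF lp, of 0] in measurable)
  also have "\<dots> = (\<integral>\<^sup>+x. ennreal (cmod (chi_check \<rho> 0 x)) \<partial>lborel)"
    using nn_integral_lborel_affine[OF m, of c 0] c by (simp add: power2_eq_square)
  also have "\<dots> = ennreal (chi_check_L1 \<rho>)"
    using integrable_chi_check_0[OF lp] unfolding chi_check_L1_def
    by (simp add: integrable_iff_bounded less_top)
  finally show ?thesis .
qed

lemma smooth1_differentiable: "smooth1 f \<Longrightarrow> f differentiable at x"
  unfolding smooth1_def by (metis funpow_0)

lemma smooth1_continuous_on_deriv: "smooth1 f \<Longrightarrow> continuous_on UNIV (deriv f)"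
  unfolding smooth1_def
  by (metis continuous_at_imp_continuous_on differentiable_imp_continuous_within funpow_0 funpow_Suc_right o_apply)

lemma continuous_on_compact_abs_bounded:
  fixes g :: "'a::topological_space \<Rightarrow> real"
  assumes "compact S" "continuous_on S g"
  obtains B where "\<And>t. t \<in> S \<Longrightarrow> \<bar>g t\<bar> \<le> B"
proof -
  have "compact (g ` S)" by (rule compact_continuous_image[OF assms(2,1)])
  then show ?thesis using that compact_imp_bounded bounded_iff by (metis image_eqI real_norm_def)
qed

lemma eq_clamp_01_if_deriv_vanishes:
  fixes f :: "real \<Rightarrow> real"
  assumes d: "\<And>x. f differentiable at x" and z: "\<And>t. t \<notin> {0..1} \<Longrightarrow> deriv f t = 0"
  shows "f t = f (max 0 (min 1 t))"
proof -
  have D: "DERIV f x :> deriv f x" for x using d DERIV_deriv_iff_real_differentiable by blast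
  consider "1 < t" | "t < 0" | "t \<in> {0..1}" by fastforce
  then show ?thesis
  proof cases
    case 1
    from MVT2[OF 1 D] obtain y where "1 < y" "f t - f 1 = (t - 1) * deriv f y" by blast
    then show ?thesis using 1 z[of y] by simp
  next
    case 2
    from MVT2[OF 2 D] obtain y where "y < 0" "f 0 - f t = (0 - t) * deriv f y" by blast
    then show ?thesis using 2 z[of y] by simp
  qed simp
qed

lemma curve_deriv_snd_bounded:
  assumes "curve c"
  obtains D where "\<And>t. \<bar>deriv (\<lambda>\<tau>. snd (c \<tau>)) t\<bar> \<le> D"
proof -
  have s: "smooth1 (\<lambda>\<tau>. snd (c \<tau>))"
    and z: "\<And>t. t \<notin> {0..1} \<Longrightarrow> deriv (\<lambda>\<tau>. snd (c \<tau>)) t = 0"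
    using assms unfolding curve_def by blast+
  obtain B where "\<And>t. t \<in> {0..1} \<Longrightarrow> \<bar>deriv (\<lambda>\<tau>. snd (c \<tau>)) t\<bar> \<le> B"
    using continuous_on_compact_abs_bounded[OF compact_Icc continuous_on_subset[OF smooth1_continuous_on_deriv[OF s]]]
    by blast
  then have "\<bar>deriv (\<lambda>\<tau>. snd (c \<tau>)) t\<bar> \<le> max B 0" for t
    using z[of t] by (cases "t \<in> {0..1}") force+
  then show ?thesis using that by blast
qed

lemma curve_fst_bounded:
  assumes "curve c"
  obtains A where "\<And>t. fst (c t) \<le> A"
proof -
  have s: "smooth1 (\<lambda>\<tau>. fst (c \<tau>))"
    and z: "\<And>t. t \<notin> {0..1} \<Longrightarrow> deriv (\<lambda>\<tau>. fst (c \<tau>)) t = 0"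
    using assms unfolding curve_def by blast+
  have "continuous_on {0..1} (\<lambda>\<tau>. fst (c \<tau>))"
    using smooth1_differentiable[OF s]
    by (meson continuous_at_imp_continuous_on differentiable_imp_continuous_within)
  then obtain B where B: "\<And>t. t \<in> {0..1} \<Longrightarrow> \<bar>fst (c t)\<bar> \<le> B"
    using continuous_on_compact_abs_bounded[OF compact_Icc] by blast
  have "fst (c t) \<le> B" for t
    using eq_clamp_01_if_deriv_vanishes[OF smooth1_differentiable[OF s] z, of t] B[of "max 0 (min 1 t)"]
    by simp
  then show ?thesis using that by blast
qed

lemma integrable_mult_square_integrable:
  fixes H F :: "'a::euclidean_space \<Rightarrow> real"
  assumes F: "F \<in> borel_measurable lborel" "integrable lborel (\<lambda>x. (F x)\<^sup>2)"
    and H: "continuous_on UNIV H" "compact (closure {x. H x \<noteq> 0})"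
  shows "integrable lborel (\<lambda>x. H x * F x)"
proof (rule Bochner_Integration.integrable_bound[where f="\<lambda>x. (H x)\<^sup>2 + (F x)\<^sup>2"])
  have "integrable lborel (\<lambda>x. (H x)\<^sup>2)"
    by (rule integrable_continuous_vanishing_outside_compact[OF _ _ H(2)])
       (use H(1) closure_subset[of "{x. H x \<noteq> 0}"] in \<open>auto intro!: continuous_intros\<close>)
  then show "integrable lborel (\<lambda>x. (H x)\<^sup>2 + (F x)\<^sup>2)" using F(2) by simp
  show "(\<lambda>x. H x * F x) \<in> borel_measurable lborel"
    using borel_measurable_continuous_onI[OF H(1)] F(1) by measurable
  have "\<bar>a * b\<bar> \<le> a\<^sup>2 + b\<^sup>2" for a b :: real
  proof -
    have "2 * \<bar>a\<bar> * \<bar>b\<bar> \<le> a\<^sup>2 + b\<^sup>2" using sum_squares_bound[of "\<bar>a\<bar>" "\<bar>b\<bar>"] by simp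
    moreover have "0 \<le> \<bar>a\<bar> * \<bar>b\<bar>" by simp
    ultimately show ?thesis unfolding abs_mult by linarith
  qed
  then show "AE x in lborel. norm (H x * F x) \<le> norm ((H x)\<^sup>2 + (F x)\<^sup>2)" by simp
qed

lemma square_integrable_add:
  fixes F G :: "'a \<Rightarrow> real"
  assumes [measurable]: "F \<in> borel_measurable M" "G \<in> borel_measurable M"
    and "integrable M (\<lambda>x. (F x)\<^sup>2)" "integrable M (\<lambda>x. (G x)\<^sup>2)"
  shows "integrable M (\<lambda>x. (F x + G x)\<^sup>2)"
proof (rule Bochner_Integration.integrable_bound[where f="\<lambda>x. 2 * (F x)\<^sup>2 + 2 * (G x)\<^sup>2"])
  show "integrable M (\<lambda>x. 2 * (F x)\<^sup>2 + 2 * (G x)\<^sup>2)" using assms(3,4) by simp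
  have "(a + b)\<^sup>2 \<le> 2 * a\<^sup>2 + 2 * b\<^sup>2" for a b :: real
    using sum_squares_bound[of a b] by (simp add: power2_sum)
  then show "AE x in M. norm ((F x + G x)\<^sup>2) \<le> norm (2 * (F x)\<^sup>2 + 2 * (G x)\<^sup>2)" by simp
qed measurable

lemma E_rep_add_null:
  assumes A: "E_rep c h F'" and B: "E_rep c g F" and null: "AE t in lborel. g t = 0"
  shows "E_rep c h (\<lambda>x. F' x + F x)"
  unfolding E_rep_def
proof (intro conjI allI impI)
  have m: "F' \<in> borel_measurable lborel" "F \<in> borel_measurable lborel"
    and sq: "integrable lborel (\<lambda>x. (F' x)\<^sup>2)" "integrable lborel (\<lambda>x. (F x)\<^sup>2)"
    using A B unfolding E_rep_def by blast+
  show "(\<lambda>x. F' x + F x) \<in> borel_measurable lborel" using m by measurable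
  show "integrable lborel (\<lambda>x. (F' x + F x)\<^sup>2)" by (rule square_integrable_add[OF m sq])
  fix H :: "real \<times> real \<Rightarrow> real"
  assume H: "continuous_on UNIV H \<and> compact (closure {x. H x \<noteq> 0})"
  have "(\<integral>x. H x * F x \<partial>lborel) =
      (\<integral>t. (LBINT x1=0..fst (c t). H (x1, snd (c t))) * g t * deriv (\<lambda>\<tau>. snd (c \<tau>)) t \<partial>lborel)"
    using B H unfolding E_rep_def by blast
  also have "\<dots> = 0" by (rule integral_eq_zero_AE) (use null in auto)
  finally have "(\<integral>x. H x * F x \<partial>lborel) = 0" .
  moreover have "integrable lborel (\<lambda>x. H x * F' x)" "integrable lborel (\<lambda>x. H x * F x)"
    using integrable_mult_square_integrable m sq H by blast+
  ultimately have "(\<integral>x. H x * (F' x + F x) \<partial>lborel) = (\<integral>x. H x * F' x \<partial>lborel)"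
    by (simp add: distrib_left)
  also have "\<dots> = (\<integral>t. (LBINT x1=0..fst (c t). H (x1, snd (c t))) * h t * deriv (\<lambda>\<tau>. snd (c \<tau>)) t \<partial>lborel)"
    using A H unfolding E_rep_def by blast
  finally show "(\<integral>x. H x * (F' x + F x) \<partial>lborel) =
      (\<integral>t. (LBINT x1=0..fst (c t). H (x1, snd (c t))) * h t * deriv (\<lambda>\<tau>. snd (c \<tau>)) t \<partial>lborel)" .
qed

text \<open>\<open>Rot\<close> only controls nondegenerate intervals; a representative for \<open>[s, s]\<close> is
  absorbed into one for \<open>[s, s + 1]\<close>.\<close>

lemma CRot_E_rep_bounded:
  assumes c: "c \<in> CRot"
  obtains M where "0 \<le> M" "\<And>s r F. s \<le> r \<Longrightarrow> E_rep c (indicator {s..r}) F \<Longrightarrow> AE x in lborel. \<bar>F x\<bar> \<le> M"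
proof -
  obtain M0 where M0: "\<And>s t. s < t \<Longrightarrow> (\<exists>F. E_rep c (indicator {s..t}) F) \<and>
        (\<forall>F. E_rep c (indicator {s..t}) F \<longrightarrow> (AE x in lborel. \<bar>F x\<bar> \<le> M0))"
    using c unfolding CRot_def by blast
  have "AE x in lborel. \<bar>F x\<bar> \<le> 2 * \<bar>M0\<bar>" if "s \<le> r" "E_rep c (indicator {s..r}) F" for s r F
  proof (cases "s < r")
    case True
    then have "AE x in lborel. \<bar>F x\<bar> \<le> M0" using M0 that(2) by blast
    then show ?thesis by eventually_elim simp
  next
    case False
    with that(1) have r: "r = s" by simp
    obtain F' where F': "E_rep c (indicator {s..s+1}) F'" using M0[of s "s+1"] by auto
    have "AE t in lborel. indicator {s..r} t = (0::real)"
      using AE_lborel_singleton[of s] by eventually_elim (simp add: r)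
    from E_rep_add_null[OF F' that(2) this]
    have "AE x in lborel. \<bar>F' x + F x\<bar> \<le> M0" using M0[of s "s+1"] by auto
    moreover have "AE x in lborel. \<bar>F' x\<bar> \<le> M0" using M0[of s "s+1"] F' by auto
    ultimately show ?thesis by eventually_elim linarith
  qed
  then show ?thesis using that[of "2 * \<bar>M0\<bar>"] by simp
qed

lemma ennreal_norm_integral_le:
  fixes f :: "'a \<Rightarrow> 'b::{banach,second_countable_topology}"
  shows "ennreal (norm (integral\<^sup>L M f)) \<le> (\<integral>\<^sup>+x. ennreal (norm (f x)) \<partial>M)"
proof (cases "integrable M f")
  case True then show ?thesis by (rule integral_norm_bound_ennreal)
next
  case False then show ?thesis by (simp add: not_integrable_integral_eq)
qed

lemma norm_integral_le_of_nn_integral: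
  fixes f :: "'a \<Rightarrow> 'b::{banach,second_countable_topology}"
  assumes "(\<integral>\<^sup>+x. ennreal (norm (f x)) \<partial>M) \<le> ennreal b" "0 \<le> b"
  shows "norm (integral\<^sup>L M f) \<le> b"
  using order_trans[OF ennreal_norm_integral_le assms(1)] assms(2) by (simp add: ennreal_le_iff)

lemma norm_convolution_le:
  fixes k :: "'a::euclidean_space \<Rightarrow> complex" and F :: "'a \<Rightarrow> real"
  assumes k: "k \<in> borel_measurable borel" and L: "(\<integral>\<^sup>+y. ennreal (cmod (k y)) \<partial>lborel) = ennreal L" "0 \<le> L"
    and F: "AE y in lborel. \<bar>F y\<bar> \<le> K" and K: "0 \<le> K"
  shows "cmod (\<integral>y. k (x - y) * of_real (F y) \<partial>lborel) \<le> K * L"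
proof (rule norm_integral_le_of_nn_integral)
  have mk: "(\<lambda>y. ennreal (cmod (k y))) \<in> borel_measurable borel" using k by measurable
  have "(\<integral>\<^sup>+y. ennreal (cmod (k (x - y) * of_real (F y))) \<partial>lborel) \<le>
      (\<integral>\<^sup>+y. ennreal (cmod (k (x + (-1) *\<^sub>R y))) * ennreal K \<partial>lborel)"
    using F by (intro nn_integral_mono_AE, eventually_elim)
      (simp add: norm_mult K ennreal_mult'[symmetric] ennreal_leI mult_left_mono)
  also have "\<dots> = (\<integral>\<^sup>+y. ennreal (cmod (k (x + (-1) *\<^sub>R y))) \<partial>lborel) * ennreal K"
    by (rule nn_integral_multc) (use k in measurable)
  also have "\<dots> = ennreal (K * L)"
    using nn_integral_lborel_affine[OF mk, of "-1" x] L K by (simp add: ennreal_mult' mult.commute)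
  finally show "(\<integral>\<^sup>+y. ennreal (norm (k (x - y) * of_real (F y))) \<partial>lborel) \<le> ennreal (K * L)" .
qed (use K L in simp)

lemma norm_Sj_le:
  assumes lp: "LP_profile \<rho>" and F: "AE y in lborel. \<bar>F y\<bar> \<le> K" and K: "0 \<le> K"
  shows "cmod (Sj \<rho> j F x) \<le> K * chi_check_L1 \<rho>"
  unfolding Sj_def
  by (rule norm_convolution_le[OF borel_measurable_chi_check[OF lp] nn_integral_norm_chi_check[OF lp] _ F K])
     (simp add: chi_check_L1_def)

lemma interval_integral_eq_indicator:
  fixes f :: "real \<Rightarrow> 'a::{banach,second_countable_topology}" and s t :: real
  assumes "s \<le> t"
  shows "(LBINT r=s..t. f r) = (\<integral>r. indicator {s<..<t} r *\<^sub>R f r \<partial>lborel)"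
  using assms by (simp add: interval_lebesgue_integral_def set_lebesgue_integral_def)

lemma borel_measurable_segment_integrand:
  fixes g :: "real \<times> real \<Rightarrow> complex" and a b :: real
  assumes "g \<in> borel_measurable borel"
  shows "(\<lambda>p::(real \<times> real) \<times> real. indicator {0<..<a} (snd p) *\<^sub>R g (fst (fst p) - snd p, snd (fst p) - b))
    \<in> borel_measurable borel"
proof -
  have "(\<lambda>p::(real \<times> real) \<times> real. (fst (fst p) - snd p, snd (fst p) - b)) \<in> borel_measurable borel"
    by (intro borel_measurable_continuous_onI continuous_intros)
  from measurable_compose[OF this assms]
  have [measurable]: "(\<lambda>p::(real \<times> real) \<times> real. g (fst (fst p) - snd p, snd (fst p) - b)) \<in> borel_measurable borel"
    by (simp add: o_def)
  have [measurable]: "(\<lambda>p::(real \<times> real) \<times> real. indicator {0<..<a} (snd p) :: real) \<in> borel_measurable borel"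
  proof -
    have [measurable]: "(snd :: (real \<times> real) \<times> real \<Rightarrow> real) \<in> borel_measurable borel"
      by (intro borel_measurable_continuous_onI continuous_intros)
    show ?thesis by measurable
  qed
  show ?thesis by measurable
qed

lemma borel_measurable_segment_integral:
  fixes g :: "real \<times> real \<Rightarrow> complex" and a b :: real
  assumes g[measurable]: "g \<in> borel_measurable borel" and a: "0 \<le> a"
  shows "(\<lambda>x. LBINT \<xi>=0..a. g (fst x - \<xi>, snd x - b)) \<in> borel_measurable lborel"
proof -
  have "(\<lambda>(x, \<xi>). indicator {0<..<a} \<xi> *\<^sub>R g (fst x - \<xi>, snd x - b)) \<in> borel_measurable (lborel \<Otimes>\<^sub>M lborel)"
    using borel_measurable_segment_integrand[OF g] by (simp add: lborel_prod case_prod_beta')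
  from lborel.borel_measurable_lebesgue_integral[OF this] show ?thesis
    by (simp add: interval_integral_eq_indicator[OF a, unfolded zero_ereal_def[symmetric]])
qed

lemma ennreal_norm_segment_integral_le:
  fixes g :: "real \<times> real \<Rightarrow> complex" and a b :: real
  assumes "0 \<le> a"
  shows "ennreal (cmod (LBINT \<xi>=0..a. g (fst x - \<xi>, snd x - b))) \<le>
    (\<integral>\<^sup>+\<xi>. ennreal (indicator {0<..<a} \<xi> * cmod (g (fst x - \<xi>, snd x - b))) \<partial>lborel)"
proof -
  have "ennreal (cmod (LBINT \<xi>=0..a. g (fst x - \<xi>, snd x - b))) \<le>
      (\<integral>\<^sup>+\<xi>. ennreal (norm (indicator {0<..<a} \<xi> *\<^sub>R g (fst x - \<xi>, snd x - b))) \<partial>lborel)"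
    unfolding interval_integral_eq_indicator[OF assms, unfolded zero_ereal_def[symmetric]]
    by (rule ennreal_norm_integral_le)
  then show ?thesis by (simp add: indicator_def)
qed

lemma nn_integral_lborel_translate:
  fixes f :: "'a::euclidean_space \<Rightarrow> ennreal"
  assumes "f \<in> borel_measurable borel"
  shows "(\<integral>\<^sup>+x. f (t + x) \<partial>lborel) = (\<integral>\<^sup>+x. f x \<partial>lborel)"
  using nn_integral_lborel_affine[OF assms, of 1 t] by simp

lemma nn_integral_norm_segment_integral_le:
  fixes g :: "real \<times> real \<Rightarrow> complex" and a b :: real
  assumes g[measurable]: "g \<in> borel_measurable borel" and a: "0 \<le> a"
  shows "(\<integral>\<^sup>+x. ennreal (cmod (LBINT \<xi>=0..a. g (fst x - \<xi>, snd x - b))) \<partial>lborel)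
    \<le> ennreal a * (\<integral>\<^sup>+y. ennreal (cmod (g y)) \<partial>lborel)"
proof -
  define G where "G x \<xi> = ennreal (indicator {0<..<a} \<xi> * cmod (g (fst x - \<xi>, snd x - b)))" for x \<xi>
  have "(\<lambda>p. ennreal (norm (indicator {0<..<a} (snd p) *\<^sub>R g (fst (fst p) - snd p, snd (fst p) - b))))
      \<in> borel_measurable (borel :: ((real \<times> real) \<times> real) measure)"
    using borel_measurable_segment_integrand[OF g] by measurable
  then have G: "case_prod G \<in> borel_measurable (lborel \<Otimes>\<^sub>M lborel)"
    by (simp add: G_def lborel_prod case_prod_beta' indicator_def)
  have "(\<integral>\<^sup>+x. ennreal (cmod (LBINT \<xi>=0..a. g (fst x - \<xi>, snd x - b))) \<partial>lborel) \<le>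
      (\<integral>\<^sup>+x. \<integral>\<^sup>+\<xi>. G x \<xi> \<partial>lborel \<partial>lborel)"
    unfolding G_def by (intro nn_integral_mono ennreal_norm_segment_integral_le a)
  also have "\<dots> = (\<integral>\<^sup>+\<xi>. \<integral>\<^sup>+x. G x \<xi> \<partial>lborel \<partial>lborel)"
    by (rule lborel_pair.Fubini'[symmetric, OF G])
  also have "\<dots> = (\<integral>\<^sup>+\<xi>. (\<integral>\<^sup>+y. ennreal (cmod (g y)) \<partial>lborel) * indicator {0<..<a} \<xi> \<partial>lborel)"
  proof (intro nn_integral_cong)
    fix \<xi> :: real
    have "(\<integral>\<^sup>+x. G x \<xi> \<partial>lborel) =
        (\<integral>\<^sup>+x. indicator {0<..<a} \<xi> * ennreal (cmod (g ((-\<xi>, -b) + x))) \<partial>lborel)"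
      by (intro nn_integral_cong) (auto simp: G_def ennreal_mult' ennreal_indicator)
    also have "\<dots> = indicator {0<..<a} \<xi> * (\<integral>\<^sup>+x. ennreal (cmod (g ((-\<xi>, -b) + x))) \<partial>lborel)"
      by (rule nn_integral_cmult) measurable
    finally show "(\<integral>\<^sup>+x. G x \<xi> \<partial>lborel) = (\<integral>\<^sup>+y. ennreal (cmod (g y)) \<partial>lborel) * indicator {0<..<a} \<xi>"
      using nn_integral_lborel_translate[of "\<lambda>y. ennreal (cmod (g y))" "(-\<xi>, -b)"] by (simp add: mult.commute)
  qed
  also have "\<dots> = (\<integral>\<^sup>+y. ennreal (cmod (g y)) \<partial>lborel) * emeasure lborel {0<..<a}"
    by (rule nn_integral_cmult_indicator) simp
  also have "\<dots> = ennreal a * (\<integral>\<^sup>+y. ennreal (cmod (g y)) \<partial>lborel)"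
    using a by (simp add: mult.commute)
  finally show ?thesis .
qed

lemma norm_L2_inner_Sj_fj_le:
  assumes lp: "LP_profile \<rho>" and F: "AE y in lborel. \<bar>F y\<bar> \<le> K" and K: "0 \<le> K" and a: "0 \<le> fst (c r)"
  shows "cmod (L2_inner (Sj \<rho> j F) (fj \<rho> j c r)) \<le>
    K * chi_check_L1 \<rho> * \<bar>deriv (\<lambda>\<tau>. snd (c \<tau>)) r\<bar> * (chi_check_L1 \<rho> * fst (c r))"
proof -
  define N where "N = chi_check_L1 \<rho>"
  define d where "d = deriv (\<lambda>\<tau>. snd (c \<tau>)) r"
  define L where "L x = (LBINT \<xi>=0..fst (c r). chi_check \<rho> j (fst x - \<xi>, snd x - snd (c r)))" for x
  have N: "0 \<le> N" by (simp add: N_def chi_check_L1_def)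
  have KNd: "0 \<le> K * N * \<bar>d\<bar>" using K N by simp
  have mL: "(\<lambda>x. ennreal (cmod (L x))) \<in> borel_measurable lborel"
    using borel_measurable_segment_integral[OF borel_measurable_chi_check[OF lp] a]
    unfolding L_def by measurable
  have "ennreal (cmod (Sj \<rho> j F x * cnj (fj \<rho> j c r x))) \<le> ennreal (K * N * \<bar>d\<bar>) * ennreal (cmod (L x))" for x
  proof -
    have "cmod (Sj \<rho> j F x * cnj (fj \<rho> j c r x)) = cmod (Sj \<rho> j F x) * (\<bar>d\<bar> * cmod (L x))"
      by (simp add: fj_def L_def d_def norm_mult)
    also have "\<dots> \<le> K * N * (\<bar>d\<bar> * cmod (L x))"
      unfolding N_def by (intro mult_right_mono norm_Sj_le[OF lp F K]) simp
    finally show ?thesis using KNd by (simp add: ennreal_mult'[symmetric] ennreal_leI mult.assoc)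
  qed
  then have "(\<integral>\<^sup>+x. ennreal (cmod (Sj \<rho> j F x * cnj (fj \<rho> j c r x))) \<partial>lborel) \<le>
      ennreal (K * N * \<bar>d\<bar>) * (\<integral>\<^sup>+x. ennreal (cmod (L x)) \<partial>lborel)"
    by (subst nn_integral_cmult[OF mL, symmetric]) (rule nn_integral_mono)
  also have "\<dots> \<le> ennreal (K * N * \<bar>d\<bar>) * (ennreal (fst (c r)) * ennreal N)"
    using nn_integral_norm_segment_integral_le[OF borel_measurable_chi_check[OF lp] a]
    unfolding L_def nn_integral_norm_chi_check[OF lp] N_def by (intro mult_left_mono) simp_all
  also have "\<dots> = ennreal (K * N * \<bar>d\<bar> * (N * fst (c r)))"
    using KNd N a by (simp add: ennreal_mult' mult.commute)
  finally show ?thesis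
    unfolding L2_inner_def N_def[symmetric] d_def[symmetric]
    by (rule norm_integral_le_of_nn_integral) (use KNd N a in simp)
qed

lemma norm_interval_integral_le:
  fixes f :: "real \<Rightarrow> 'a::{banach,second_countable_topology}" and s t :: real
  assumes st: "s \<le> t" and C: "0 \<le> C" and f: "\<And>r. s \<le> r \<Longrightarrow> r \<le> t \<Longrightarrow> norm (f r) \<le> C"
  shows "norm (LBINT r=s..t. f r) \<le> C * (t - s)"
  unfolding interval_integral_eq_indicator[OF st]
proof (rule norm_integral_le_of_nn_integral)
  have "(\<integral>\<^sup>+r. ennreal (norm (indicator {s<..<t} r *\<^sub>R f r)) \<partial>lborel) \<le>
      (\<integral>\<^sup>+r. ennreal C * indicator {s<..<t} r \<partial>lborel)"
    by (intro nn_integral_mono) (auto simp: indicator_def intro!: ennreal_leI f)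
  also have "\<dots> = ennreal (C * (t - s))"
    using st C by (simp add: nn_integral_cmult_indicator ennreal_mult')
  finally show "(\<integral>\<^sup>+r. ennreal (norm (indicator {s<..<t} r *\<^sub>R f r)) \<partial>lborel) \<le> ennreal (C * (t - s))" .
qed (use st C in simp)

theorem lemma9p2:
  fixes \<rho>0 :: "real \<times> real \<Rightarrow> real" and c :: "real \<Rightarrow> real \<times> real"
  assumes "LP_profile \<rho>0" and "c \<in> CRot"
  shows "\<exists>C>0.
    (\<forall>j s r1 r2 F. j \<ge> -1 \<longrightarrow> s \<le> r1 \<longrightarrow> s \<le> r2 \<longrightarrow> E_rep c (indicator {s..r1}) F \<longrightarrow>
        cmod (L2_inner (Sj \<rho>0 j F) (fj \<rho>0 j c r2)) \<le> C) \<and>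
    (\<forall>j s t G. j \<ge> -1 \<longrightarrow> s \<le> t \<longrightarrow> (\<forall>r. s \<le> r \<longrightarrow> E_rep c (indicator {s..r}) (G r)) \<longrightarrow>
        cmod (LBINT r=s..t. L2_inner (Sj \<rho>0 j (G r)) (fj \<rho>0 j c r)) \<le> C * (t - s))"
proof -
  have cv: "curve c" using assms(2) unfolding CRot_def by blast
  then have pos: "\<And>t. 0 < fst (c t)" unfolding curve_def by blast
  obtain M where M: "0 \<le> M" "\<And>s r F. s \<le> r \<Longrightarrow> E_rep c (indicator {s..r}) F \<Longrightarrow> AE x in lborel. \<bar>F x\<bar> \<le> M"
    using CRot_E_rep_bounded[OF assms(2)] by blast
  obtain D where D: "\<And>t. \<bar>deriv (\<lambda>\<tau>. snd (c \<tau>)) t\<bar> \<le> D" using curve_deriv_snd_bounded[OF cv] by blast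
  obtain A where A: "\<And>t. fst (c t) \<le> A" using curve_fst_bounded[OF cv] by blast
  define N where "N = chi_check_L1 \<rho>0"
  have N: "0 \<le> N" by (simp add: N_def chi_check_L1_def)
  define C where "C = M * N * D * (N * A) + 1"
  have "0 \<le> M * N * D * (N * A)"
    using M(1) N order_trans[OF abs_ge_zero D] order_less_le_trans[OF pos A] by simp
  then have C: "0 < C" unfolding C_def by simp
  have bound: "cmod (L2_inner (Sj \<rho>0 j F) (fj \<rho>0 j c r)) \<le> C"
    if "s \<le> r'" "E_rep c (indicator {s..r'}) F" for j s r r' F
  proof -
    have "cmod (L2_inner (Sj \<rho>0 j F) (fj \<rho>0 j c r)) \<le>
        M * N * \<bar>deriv (\<lambda>\<tau>. snd (c \<tau>)) r\<bar> * (N * fst (c r))"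
      unfolding N_def using norm_L2_inner_Sj_fj_le[OF assms(1) M(2)[OF that] M(1)] pos[of r] by simp
    also have "\<dots> \<le> M * N * D * (N * A)"
      using M(1) N D[of r] A[of r] pos[of r] by (intro mult_mono mult_left_mono) auto
    finally show ?thesis unfolding C_def by simp
  qed
  show ?thesis
    using bound C by (intro exI[of _ C]) (auto intro!: norm_interval_integral_le)
qed

end
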